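(* For every positive integer $n$, \[ Z(n)=1+\frac{\left(1+(-1)^{n-1}\right)(n-1)!}{n+1}, \] where $Z(n)=\sum_{k=0}^{n-1}\frac{1+(-1)^{k}k!(n-k-1)!}{n}$. In particular $Z(2m)=1$ and $Z(2m-1)=1+\frac{(2m-2)!}{m}$ for all positive integers $m$, and $Z(n)\in\mathbb{N}$ for all $n\in\mathbb{N}$. *)

theory Defs
  imports Complex_Main
begin

definition Z :: "nat \<Rightarrow> real" where
  "Z n = (\<Sum>k<n. (1 + (-1) ^ k * fact k * fact (n - k - 1)) / real n)"

end

theory Submission
  imports Defs
begin

text \<open>
  Since \<open>(N + 2) k! (N - k)! = k! (N + 1 - k)! + (k + 1)! (N - k)!\<close>, multiplying the alternating
  sum \<open>\<Sum>k\<le>N. (-1)^k k! (N - k)!\<close> by \<open>N + 2\<close> makes it telescope to \<open>(1 + (-1)^N) (N + 1)!\<close>.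
  With \<open>n = N + 1\<close> this is the closed form of \<open>Z n\<close>; for odd \<open>n = 2m - 1\<close> the term
  \<open>(2m - 2)!/m\<close> is an integer because \<open>m \<le> 2m - 2\<close> or \<open>m = 1\<close>.
\<close>

lemma sum_alternating_telescope:
  fixes a :: "nat \<Rightarrow> 'a::comm_ring_1"
  shows "(\<Sum>k<m. (-1) ^ k * (a k + a (Suc k))) = a 0 - (-1) ^ m * a m"
  by (induction m) (auto simp: algebra_simps)

lemma fact_mult_fact_split:
  fixes N k :: nat
  assumes "k \<le> N"
  shows "of_nat (N + 2) * (fact k * fact (N - k))
           = fact k * fact (Suc N - k) + fact (Suc k) * (fact (N - k) :: 'a::{comm_semiring_1, semiring_char_0})"
proof -
  obtain d where "N = k + d" using assms le_Suc_ex by blast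
  then have "Suc N - k = Suc d" "N - k = d" by simp_all
  then show ?thesis using \<open>N = k + d\<close> by (simp add: algebra_simps)
qed

lemma alternating_sum_fact_mult_fact:
  "of_nat (N + 2) * (\<Sum>k\<le>N. (-1) ^ k * fact k * fact (N - k))
     = (1 + (-1) ^ N) * (fact (Suc N) :: 'a::{comm_ring_1, semiring_char_0})"
proof -
  define a :: "nat \<Rightarrow> 'a" where "a k = fact k * fact (Suc N - k)" for k
  have "of_nat (N + 2) * (\<Sum>k\<le>N. (-1) ^ k * fact k * (fact (N - k) :: 'a))
      = (\<Sum>k<Suc N. (-1) ^ k * (a k + a (Suc k)))"
    unfolding sum_distrib_left lessThan_Suc_atMost
  proof (rule sum.cong[OF refl])
    fix k assume "k \<in> {..N}"
    then have "k \<le> N" by simp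
    then have term_split: "of_nat (N + 2) * (fact k * fact (N - k)) = a k + a (Suc k)"
      unfolding a_def diff_Suc_Suc by (rule fact_mult_fact_split)
    show "of_nat (N + 2) * ((-1) ^ k * fact k * fact (N - k)) = (-1) ^ k * (a k + a (Suc k))"
      by (simp flip: term_split add: mult_ac)
  qed
  also have "\<dots> = a 0 - (-1) ^ Suc N * a (Suc N)"
    by (rule sum_alternating_telescope)
  also have "\<dots> = (1 + (-1) ^ N) * fact (Suc N)"
    by (simp add: a_def algebra_simps)
  finally show ?thesis .
qed

lemma Z_closed_form:
  assumes "n \<ge> 1"
  shows "Z n = 1 + (1 + (-1) ^ (n - 1)) * fact (n - 1) / real (n + 1)"
proof -
  obtain N where n: "n = Suc N" using assms by (cases n) auto
  have "Z n = (\<Sum>k<n. 1 / real n) + (\<Sum>k\<le>N. (-1) ^ k * fact k * fact (N - k)) / real n"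
    by (simp add: Z_def n lessThan_Suc_atMost add_divide_distrib sum.distrib sum_divide_distrib)
  also have "(\<Sum>k<n. 1 / real n) = 1"
    using assms by simp
  also have "(\<Sum>k\<le>N. (-1) ^ k * fact k * fact (N - k)) = (1 + (-1) ^ N) * fact (Suc N) / real (N + 2)"
    using alternating_sum_fact_mult_fact[of N] by (simp add: field_simps del: of_nat_Suc of_nat_add)
  also have "(1 + (-1) ^ N) * fact (Suc N) / real (N + 2) / real n = (1 + (-1) ^ N) * fact N / real (N + 2)"
    by (simp add: n del: of_nat_Suc)
  finally show ?thesis
    by (simp add: n)
qed

lemma Z_even:
  assumes "m \<ge> 1"
  shows "Z (2 * m) = 1"
proof -
  have "odd (2 * m - 1)" using assms by presburger
  then show ?thesis using Z_closed_form[of "2 * m"] assms by simp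
qed

lemma Z_odd:
  assumes "m \<ge> 1"
  shows "Z (2 * m - 1) = 1 + fact (2 * m - 2) / real m"
proof -
  have "even (2 * m - 2)" by presburger
  moreover have "2 * m - 1 - 1 = 2 * m - 2" "2 * m - 1 + 1 = 2 * m" using assms by auto
  ultimately show ?thesis using Z_closed_form[of "2 * m - 1"] assms by simp
qed

lemma Z_in_Nats: "Z n \<in> \<nat>"
proof -
  consider "n = 0" | m where "m \<ge> 1" "n = 2 * m" | m where "m \<ge> 1" "n = 2 * m - 1"
  proof -
    have "n = 0 \<or> (\<exists>m \<ge> 1. n = 2 * m) \<or> (\<exists>m \<ge> 1. n = 2 * m - 1)" by presburger
    then show thesis using that by blast
  qed
  then show ?thesis
  proof cases
    case 1
    then show ?thesis by (simp add: Z_def)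
  next
    case (2 m)
    then show ?thesis by (simp add: Z_even)
  next
    case (3 m)
    have "m dvd fact (2 * m - 2)"
      using \<open>m \<ge> 1\<close> by (cases "m = 1") (auto intro: dvd_fact)
    then obtain q where "fact (2 * m - 2) = m * q" ..
    then have "(fact (2 * m - 2) :: real) = real m * real q"
      by (metis of_nat_fact of_nat_mult)
    then have "fact (2 * m - 2) / real m = real q"
      using \<open>m \<ge> 1\<close> by simp
    then show ?thesis using 3 Z_odd by (simp add: of_nat_in_Nats)
  qed
qed

theorem mainTheorem4:
  shows "(\<forall>n::nat. n \<ge> 1 \<longrightarrow>
            Z n = 1 + (1 + (-1) ^ (n - 1)) * fact (n - 1) / real (n + 1))
       \<and> (\<forall>m::nat. m \<ge> 1 \<longrightarrow>
            Z (2 * m) = 1 \<and> Z (2 * m - 1) = 1 + fact (2 * m - 2) / real m)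
       \<and> (\<forall>n::nat. Z n \<in> \<nat>)"
  using Z_closed_form Z_even Z_odd Z_in_Nats by blast

end
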